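(* Let $G$ be a finite abelian group and $\sim$ a nontrivial equivalence relation on $G - \{0\}$ such that for $x \neq y$, $x \sim y$ implies $(y-x) \sim (-x)$. Suppose $z \in G-\{0\}$ satisfies $z \sim (-z)$, and let $[z]$ denote its equivalence class. Then $[z] \cup \{0\}$ is a proper subgroup of $G$.
   Context: An equivalence relation is nontrivial if it has at least two classes. *)

theory Defs
  imports "HOL-Algebra.Algebra"
begin

end

theory Submission
  imports Defs
begin

text \<open>Write \<open>x \<sim> y\<close> for \<open>R\<close> additively and let \<open>C\<close> be the class of \<open>z\<close>. For \<open>x \<in> C\<close>,
  \<open>x \<noteq> z\<close>, translating \<open>z \<sim> x\<close> gives \<open>x - z \<sim> -z \<sim> z\<close>, and translating \<open>x \<sim> x - z\<close> gives
  \<open>-z \<sim> -x\<close>; so \<open>C = -C\<close>. For \<open>x, y \<in> C\<close> with \<open>x + y \<noteq> 0\<close>, translating \<open>x \<sim> -y\<close>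
  gives \<open>-(x + y) \<sim> -x\<close>, so \<open>x + y \<in> C\<close>. Thus \<open>C \<union> {0}\<close> is a subgroup, and it is proper
  because \<open>R\<close> has a second class.\<close>

lemma class_psubset_if_card_quotient_ge_2:
  assumes "equiv A R" and "card (A // R) \<ge> 2" and "a \<in> A"
  shows "R `` {a} \<subset> A"
proof -
  have a_class: "R `` {a} \<in> A // R" using assms(3) by (rule quotientI)
  obtain D where D: "D \<in> A // R" "D \<noteq> R `` {a}"
  proof -
    have "\<not> A // R \<subseteq> {R `` {a}}"
    proof
      assume "A // R \<subseteq> {R `` {a}}"
      then have "card (A // R) \<le> 1" using card_mono[of "{R `` {a}}"] by fastforce
      with assms(2) show False by simp
    qed
    with that show ?thesis by blast
  qed
  have "R `` {a} \<inter> D = {}" using quotient_disj[OF assms(1) a_class D(1)] D(2) by blast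
  moreover obtain d where "d \<in> D" using D(1) assms(1) by (metis equals0I in_quotient_imp_non_empty)
  moreover have "D \<subseteq> A" using D(1) assms(1) by (meson in_quotient_imp_subset)
  moreover have "R `` {a} \<subseteq> A" using assms(1) by (auto simp: equiv_def refl_on_def)
  ultimately show ?thesis by blast
qed

locale translation_equiv = comm_group G for G (structure) +
  fixes R :: "('a \<times> 'a) set"
  assumes equiv: "equiv (carrier G - {\<one>}) R"
    and translate: "\<And>x y. x \<noteq> y \<Longrightarrow> (x, y) \<in> R \<Longrightarrow> (y \<otimes> inv x, inv x) \<in> R"
begin

lemma related_in_carrier: "(x, y) \<in> R \<Longrightarrow> x \<in> carrier G - {\<one>} \<and> y \<in> carrier G - {\<one>}"
  using equiv by (auto simp: equiv_def refl_on_def)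

lemma related_sym: "(x, y) \<in> R \<Longrightarrow> (y, x) \<in> R"
  using equiv by (meson equivE symD)

lemma related_trans: "(x, y) \<in> R \<Longrightarrow> (y, w) \<in> R \<Longrightarrow> (x, w) \<in> R"
  using equiv by (meson equivE transD)

lemma class_inv_closed:
  assumes z_inv: "(z, inv z) \<in> R" and x: "(z, x) \<in> R"
  shows "(z, inv x) \<in> R"
proof (cases "x = z")
  case True
  with z_inv show ?thesis by simp
next
  case False
  have xc: "x \<in> carrier G" and zc: "z \<in> carrier G" "z \<noteq> \<one>"
    using x related_in_carrier by blast+
  have "(x \<otimes> inv z, inv z) \<in> R" using translate[OF _ x] False by auto
  then have z_xz: "(z, x \<otimes> inv z) \<in> R" using z_inv related_sym related_trans by blast
  have "x \<noteq> x \<otimes> inv z"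
    using xc zc by (metis inv_closed inv_eq_1_iff r_one l_cancel one_closed)
  moreover have "(x, x \<otimes> inv z) \<in> R" using x z_xz related_sym related_trans by blast
  ultimately have "(x \<otimes> inv z \<otimes> inv x, inv x) \<in> R" by (rule translate)
  moreover have "x \<otimes> inv z \<otimes> inv x = inv z"
    using xc zc by (metis inv_closed m_assoc m_comm r_inv r_one)
  ultimately show ?thesis using z_inv related_trans by auto
qed

lemma class_mult_closed:
  assumes z_inv: "(z, inv z) \<in> R" and x: "(z, x) \<in> R" and y: "(z, y) \<in> R"
    and xy: "x \<otimes> y \<noteq> \<one>"
  shows "(z, x \<otimes> y) \<in> R"
proof -
  have xc: "x \<in> carrier G" and yc: "y \<in> carrier G" using x y related_in_carrier by blast+
  have "x \<noteq> inv y" using xy xc yc by auto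
  moreover have "(x, inv y) \<in> R"
    using x class_inv_closed[OF z_inv y] related_sym related_trans by blast
  ultimately have "(inv y \<otimes> inv x, inv x) \<in> R" by (rule translate)
  then have "(z, inv y \<otimes> inv x) \<in> R"
    using class_inv_closed[OF z_inv x] related_sym related_trans by blast
  then have "(z, inv (inv y \<otimes> inv x)) \<in> R" by (rule class_inv_closed[OF z_inv])
  with xc yc show ?thesis by (simp add: inv_mult_group)
qed

lemma subgroup_class_Un_one:
  assumes "(z, inv z) \<in> R"
  shows "subgroup (R `` {z} \<union> {\<one>}) G"
proof
  show "R `` {z} \<union> {\<one>} \<subseteq> carrier G" using related_in_carrier by auto
  show "\<one> \<in> R `` {z} \<union> {\<one>}" by simp
  show "x \<otimes> y \<in> R `` {z} \<union> {\<one>}" if "x \<in> R `` {z} \<union> {\<one>}" "y \<in> R `` {z} \<union> {\<one>}" for x y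
    using that class_mult_closed[OF assms] related_in_carrier by fastforce
  show "inv x \<in> R `` {z} \<union> {\<one>}" if "x \<in> R `` {z} \<union> {\<one>}" for x
    using that class_inv_closed[OF assms] by auto
qed

end

theorem lemma3p14:
  fixes G (structure) and R :: "('a \<times> 'a) set" and z :: 'a
  assumes "comm_group G"
    and "finite (carrier G)"
    and "equiv (carrier G - {\<one>}) R"
    and "card ((carrier G - {\<one>}) // R) \<ge> 2"
    and "\<And>x y. x \<noteq> y \<Longrightarrow> (x, y) \<in> R \<Longrightarrow> (y \<otimes> inv x, inv x) \<in> R"
    and "z \<in> carrier G - {\<one>}"
    and "(z, inv z) \<in> R"
  shows "subgroup (R `` {z} \<union> {\<one>}) G \<and> R `` {z} \<union> {\<one>} \<noteq> carrier G"
proof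
  interpret translation_equiv G R
    using assms(1,3,5) by (simp add: translation_equiv_def translation_equiv_axioms_def)
  show "subgroup (R `` {z} \<union> {\<one>}) G" using assms(7) by (rule subgroup_class_Un_one)
  have "R `` {z} \<subset> carrier G - {\<one>}"
    using assms(3,4,6) by (rule class_psubset_if_card_quotient_ge_2)
  then show "R `` {z} \<union> {\<one>} \<noteq> carrier G" by blast
qed

end
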